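(* Let $a,b$ be positive integers and $c$ an integer with $-b<c<a$, such that $\gcd(a,b,c)=1$ and each of $\gcd(a,b)$, $\gcd(a,c)$, $\gcd(b,c)$ differs from $1$. Let $d=\gcd(a,b)$ and $k\in\mathbb{N}\cup\{\infty\}$ with $k\ge d-1$. If $(a,b)$ is of case $(1')$, $(2')$ or $(3')$, then the $\mathbb{Z}$-grading $E_{(-b,c,a)}^{(\infty,k,\infty)}$ is $d$-central.
   Context: $E$ is the Grassmann algebra (over a field of characteristic zero) of an infinite-dimensional vector space with basis $e_1,e_2,\dots$; its basis consists of $1$ and the monomials $e_{i_1}\cdots e_{i_k}$, $i_1<\dots<i_k$, of length $k$ and support $\{e_{i_1},\dots,e_{i_k}\}$. For pairwise distinct integers $r_j$ and $v_j\in\mathbb{N}\cup\{\infty\}$, $E_{(r_1,\dots,r_n)}^{(v_1,\dots,v_n)}=\bigoplus_rA_r$ is the $\mathbb{Z}$-grading obtained by splitting $\{e_i\}$ into $n$ disjoint sets of cardinalities $v_1,\dots,v_n$, giving elements of the $j$-th set degree $r_j$, monomials the sum of degrees. It is $d$-central if each $e_i$ is homogeneous, $A_r\neq0$ for all $r\in\mathbb{Z}$, and for each $h\in d\mathbb{Z}$, $A_h$ contains infinitely many monomials of even length with pairwise disjoint supports. Cases: for positive $a,b$ with $d=\gcd(a,b)$ there exist $\alpha,\beta,\alpha',\beta'\in\mathbb{N}_0$ with $d=\alpha a-\beta b$ and $-d=\alpha'a-\beta'b$; choose $(\alpha,\beta)$ with $\alpha+\beta$ least possible and $(\alpha',\beta')$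 with $\alpha'+\beta'$ least possible. Case $(1')$: $\alpha+\beta$ and $\alpha'+\beta'$ both even; $(2')$: $\alpha+\beta$ even, $\alpha'+\beta'$ odd; $(3')$: $\alpha+\beta$ odd, $\alpha'+\beta'$ even; $(4')$: both odd. *)

theory Defs
  imports Main "HOL-Library.Extended_Nat"
begin

text \<open>Generators e_1, e_2, ... of the Grassmann algebra are indexed by natural numbers.
  A monomial e_{i_1}...e_{i_k} (i_1 < ... < i_k) is identified with its support, a finite
  set of indices; its length is the cardinality of the support.  A grading in which every
  generator is homogeneous is given by a weight function w assigning each generator its
  degree; a monomial then has degree the sum of the degrees of its generators.\<close>

definition mono_deg :: "(nat \<Rightarrow> int) \<Rightarrow> nat set \<Rightarrow> int" where
  "mono_deg w S = (\<Sum>i\<in>S. w i)"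

definition ecard :: "'a set \<Rightarrow> enat" where
  "ecard A = (if finite A then enat (card A) else \<infinity>)"

text \<open>w realises the grading E_{(r_1,...,r_n)}^{(v_1,...,v_n)}: the generators are split
  into n disjoint sets of cardinalities v_1,...,v_n, those of the j-th set having degree r_j
  (the r_j pairwise distinct).\<close>
definition is_grading :: "(nat \<Rightarrow> int) \<Rightarrow> int list \<Rightarrow> enat list \<Rightarrow> bool" where
  "is_grading w rs vs \<longleftrightarrow> length rs = length vs \<and> distinct rs \<and>
     (\<forall>i. w i \<in> set rs) \<and>
     (\<forall>j<length rs. ecard {i. w i = rs ! j} = vs ! j)"

text \<open>A_r \<noteq> 0 iff some monomial (including 1 = empty support) has degree r,
  since A_r is spanned by the monomials of degree r.\<close>
definition d_central :: "(nat \<Rightarrow> int) \<Rightarrow> int \<Rightarrow> bool" where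
  "d_central w d \<longleftrightarrow>
     (\<forall>r::int. \<exists>S. finite S \<and> mono_deg w S = r) \<and>
     (\<forall>h::int. d dvd h \<longrightarrow>
        (\<exists>F::nat set set. infinite F \<and> pairwise disjnt F \<and>
           (\<forall>S\<in>F. finite S \<and> even (card S) \<and> mono_deg w S = h)))"

definition min_rep :: "int \<Rightarrow> int \<Rightarrow> int \<Rightarrow> nat" where
  "min_rep a b s = (LEAST n. \<exists>\<alpha> \<beta>::nat. int \<alpha> * a - int \<beta> * b = s \<and> \<alpha> + \<beta> = n)"

definition case_of :: "int \<Rightarrow> int \<Rightarrow> nat" where
  "case_of a b = (let m = min_rep a b (gcd a b); m' = min_rep a b (- gcd a b) in
     if even m \<and> even m' then 1
     else if even m \<and> odd m' then 2
     else if odd m \<and> even m' then 3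
     else 4)"

end

(* Let d = gcd a b.  Every multiple h of d is alpha a - beta b with alpha, beta >= 0.  Outside
   case (4') a/d + b/d is odd, so shifting (alpha, beta) by (b/d, a/d) changes the parity of
   alpha + beta without changing the value; hence alpha + beta can be taken even and positive, and
   consecutive disjoint blocks of alpha generators of degree a and beta of degree -b give
   infinitely many disjoint even monomials of degree h.  For an arbitrary degree r, coprimality of
   d and c yields 0 <= j < d with d dividing r - j c; then j <= k generators of degree c together
   with a monomial of degree r - j c in the other two kinds of generators have degree r. *)

theory Submission
  imports Defs "HOL-Library.Infinite_Set"
begin

lemma nat_combination_exists:
  fixes a b h :: int
  assumes "a > 0" "b > 0" "gcd a b dvd h"
  obtains \<alpha> \<beta> :: nat where "int \<alpha> * a - int \<beta> * b = h"
proof -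
  obtain u v where uv: "u * a + v * b = gcd a b" using bezout_int by blast
  obtain m where m: "h = gcd a b * m" using assms(3) by blast
  define x where "x = m * u"
  define y where "y = - m * v"
  have xy: "x * a - y * b = h" unfolding x_def y_def m uv[symmetric] by (simp add: algebra_simps)
  \<comment> \<open>Shifting \<open>(x, y)\<close> by \<open>t (b, a)\<close> keeps \<open>x a - y b\<close> and makes both entries nonnegative.\<close>
  define t where "t = \<bar>x\<bar> + \<bar>y\<bar>"
  have "t \<ge> 0" by (simp add: t_def)
  then have "t \<le> t * b" "t \<le> t * a" using assms(1,2) by (simp_all add: mult_le_cancel_left1)
  then have "x + t * b \<ge> 0" "y + t * a \<ge> 0" unfolding t_def by linarith+
  moreover have "(x + t * b) * a - (y + t * a) * b = h" using xy by (simp add: algebra_simps)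
  ultimately show thesis using that[of "nat (x + t * b)" "nat (y + t * a)"] by simp
qed

lemma even_nat_combination_exists:
  fixes a b h :: int
  assumes "a > 0" "b > 0" "gcd a b dvd h" and odd_sum: "odd (a div gcd a b + b div gcd a b)"
  obtains \<alpha> \<beta> :: nat where "int \<alpha> * a - int \<beta> * b = h" "even (\<alpha> + \<beta>)" "\<alpha> + \<beta> > 0"
proof -
  define d where "d = gcd a b"
  define a' where "a' = nat (a div d)"
  define b' where "b' = nat (b div d)"
  have "d > 0" using assms(1) by (simp add: d_def)
  have a_eq: "a = d * int a'" and b_eq: "b = d * int b'"
    using assms(1,2) \<open>d > 0\<close> by (simp_all add: a'_def b'_def d_def pos_imp_zdiv_nonneg_iff)
  have "b' > 0" using b_eq assms(2) by (cases "b' = 0") auto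
  have "int (a' + b') = a div d + b div d"
    using assms(1,2) \<open>d > 0\<close> by (simp add: a'_def b'_def pos_imp_zdiv_nonneg_iff)
  then have "odd (int (a' + b'))" using odd_sum by (simp add: d_def)
  then have "odd (a' + b')" by simp
  obtain \<alpha> \<beta> :: nat where r: "int \<alpha> * a - int \<beta> * b = h" using nat_combination_exists assms(1-3) .
  define t :: nat where "t = (if even (\<alpha> + \<beta>) then 2 else 1)"
  have "int (\<alpha> + t * b') * a - int (\<beta> + t * a') * b = h"
    using r unfolding a_eq b_eq by (simp add: algebra_simps)
  moreover have "even (\<alpha> + t * b' + (\<beta> + t * a'))"
  proof -
    have "\<alpha> + t * b' + (\<beta> + t * a') = \<alpha> + \<beta> + t * (a' + b')" by (simp add: algebra_simps)
    moreover have "even (\<alpha> + \<beta>) \<and> t = 2 \<or> odd (\<alpha> + \<beta>) \<and> t = 1" by (simp add: t_def)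
    ultimately show ?thesis using \<open>odd (a' + b')\<close> by auto
  qed
  moreover have "t > 0" by (simp add: t_def)
  then have "\<alpha> + t * b' + (\<beta> + t * a') > 0" using \<open>b' > 0\<close> by simp
  ultimately show thesis by (rule that)
qed

lemma nat_combination_parity:
  fixes a b h :: int
  assumes "odd (a div gcd a b)" "odd (b div gcd a b)" "int \<alpha> * a - int \<beta> * b = h"
  shows "even (\<alpha> + \<beta>) \<longleftrightarrow> even (h div gcd a b)"
proof -
  define d where "d = gcd a b"
  define a' where "a' = a div d"
  define b' where "b' = b div d"
  have "d \<noteq> 0" using assms(1) by (auto simp: d_def)
  have "a = d * a'" "b = d * b'" by (simp_all add: a'_def b'_def d_def)
  then have "h = d * (int \<alpha> * a' - int \<beta> * b')" using assms(3) by (simp add: algebra_simps)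
  then have "h div d = int \<alpha> * a' - int \<beta> * b'" using \<open>d \<noteq> 0\<close> by simp
  moreover have "odd a'" "odd b'" using assms(1,2) by (simp_all add: a'_def b'_def d_def)
  ultimately show ?thesis by (simp add: d_def)
qed

lemma min_rep_gcd_odd:
  fixes a b s :: int
  assumes "a > 0" "b > 0" "odd (a div gcd a b)" "odd (b div gcd a b)"
    and s: "s = gcd a b \<or> s = - gcd a b"
  shows "odd (min_rep a b s)"
proof -
  have "gcd a b dvd s" using s by auto
  then obtain \<alpha>0 \<beta>0 :: nat where "int \<alpha>0 * a - int \<beta>0 * b = s"
    using nat_combination_exists assms(1,2) by blast
  then have "\<exists>n \<alpha> \<beta>. int \<alpha> * a - int \<beta> * b = s \<and> \<alpha> + \<beta> = n" by blast
  then have "\<exists>\<alpha> \<beta>. int \<alpha> * a - int \<beta> * b = s \<and> \<alpha> + \<beta> = min_rep a b s"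
    unfolding min_rep_def by (rule LeastI_ex)
  then obtain \<alpha> \<beta> :: nat where r: "int \<alpha> * a - int \<beta> * b = s" and "\<alpha> + \<beta> = min_rep a b s"
    by blast
  moreover have "odd (s div gcd a b)" using s assms(1) by (auto simp: zdiv_zminus1_eq_if)
  ultimately show ?thesis using nat_combination_parity[OF assms(3,4) r] by simp
qed

text \<open>Outside case (4'), \<open>a/d\<close> and \<open>b/d\<close> have opposite parity: being coprime they are not both
  even, and if both were odd every representation of \<open>\<plusminus>d\<close> would have odd length.\<close>

lemma odd_quotient_sum_if_not_case_4:
  fixes a b :: int
  assumes "a > 0" "b > 0" "case_of a b \<noteq> 4"
  shows "odd (a div gcd a b + b div gcd a b)"
proof (rule ccontr)
  assume "\<not> ?thesis"
  moreover have "coprime (a div gcd a b) (b div gcd a b)"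
    using assms(1) by (simp add: div_gcd_coprime)
  then have "\<not> (even (a div gcd a b) \<and> even (b div gcd a b))"
    using coprime_common_divisor[of "a div gcd a b" "b div gcd a b" 2] by auto
  ultimately have "odd (a div gcd a b)" "odd (b div gcd a b)" by auto
  then have "odd (min_rep a b (gcd a b))" "odd (min_rep a b (- gcd a b))"
    by (intro min_rep_gcd_odd assms(1,2); simp)+
  then show False using assms(3) unfolding case_of_def Let_def by simp
qed

lemma coprime_residue_exists:
  fixes d c r :: int
  assumes "d > 0" "coprime d c"
  obtains j where "0 \<le> j" "j < d" "d dvd r - j * c"
proof -
  obtain u v where uv: "u * c + v * d = 1"
    using bezout_int[of c d] assms(2) by (auto simp: coprime_iff_gcd_eq_1 gcd.commute)
  define j where "j = (u * r) mod d"
  have "r - j * c = r * (u * c + v * d) - j * c" using uv by simp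
  also have "\<dots> = r * v * d + (u * r - j) * c" by (simp add: algebra_simps)
  finally have "r - j * c = r * v * d + (u * r - j) * c" .
  moreover have "d dvd u * r - j" unfolding j_def by (rule dvd_minus_mod)
  ultimately have "d dvd r - j * c" by simp
  with assms(1) show thesis by (intro that) (simp_all add: j_def)
qed

lemma mono_deg_fibre:
  assumes "finite S" "S \<subseteq> {i. w i = r}"
  shows "mono_deg w S = int (card S) * r"
  using assms by (simp add: mono_deg_def subset_eq)

lemma mono_deg_Un:
  assumes "finite S" "finite T" "disjnt S T"
  shows "mono_deg w (S \<union> T) = mono_deg w S + mono_deg w T"
  using assms by (simp add: mono_deg_def disjnt_def sum.union_disjoint)

lemma ecard_eq_infinity_iff: "ecard A = \<infinity> \<longleftrightarrow> infinite A"
  by (simp add: ecard_def)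

lemma obtain_subset_with_card_le_ecard:
  assumes "enat n \<le> ecard A"
  obtains T where "T \<subseteq> A" "finite T" "card T = n"
proof (cases "finite A")
  case True
  with assms have "n \<le> card A" by (simp add: ecard_def)
  then obtain T where "T \<subseteq> A" "card T = n" by (metis obtain_subset_with_card_n)
  with True show thesis using that finite_subset by blast
next
  case False
  then show thesis using that infinite_arbitrarily_large by blast
qed

lemma every_degree_attained:
  fixes w :: "nat \<Rightarrow> int" and a b c r :: int
  assumes "a > 0" "b > 0" "c \<noteq> a" "c \<noteq> - b" "coprime (gcd a b) c"
    and "infinite {i. w i = a}" "infinite {i. w i = - b}"
    and "enat (nat (gcd a b - 1)) \<le> ecard {i. w i = c}"
  obtains S where "finite S" "mono_deg w S = r"
proof -
  obtain j where j: "0 \<le> j" "j < gcd a b" "gcd a b dvd r - j * c"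
    using coprime_residue_exists[of "gcd a b" c] assms(1,5) by auto
  obtain \<alpha> \<beta> :: nat where \<alpha>\<beta>: "int \<alpha> * a - int \<beta> * b = r - j * c"
    using nat_combination_exists assms(1,2) j(3) by blast
  obtain P where P: "P \<subseteq> {i. w i = a}" "finite P" "card P = \<alpha>"
    using infinite_arbitrarily_large assms(6) by blast
  obtain Q where Q: "Q \<subseteq> {i. w i = - b}" "finite Q" "card Q = \<beta>"
    using infinite_arbitrarily_large assms(7) by blast
  have "enat (nat j) \<le> ecard {i. w i = c}"
    using j(2) assms(8) by (meson enat_ord_simps(1) nat_mono order_trans zle_diff1_eq)
  then obtain T where T: "T \<subseteq> {i. w i = c}" "finite T" "card T = nat j"
    by (rule obtain_subset_with_card_le_ecard)
  have "disjnt P Q" "disjnt (P \<union> Q) T"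
    using P(1) Q(1) T(1) assms(1-4) by (fastforce simp: disjnt_def)+
  then have "mono_deg w (P \<union> Q \<union> T) = int \<alpha> * a + int \<beta> * (- b) + int (nat j) * c"
    using P Q T by (simp add: mono_deg_Un mono_deg_fibre)
  also have "\<dots> = r" using \<alpha>\<beta> j(1) by simp
  finally have "mono_deg w (P \<union> Q \<union> T) = r" .
  with P(2) Q(2) T(2) show thesis by (intro that [of "P \<union> Q \<union> T"]) simp_all
qed

lemma disjnt_blocks:
  fixes m n k :: nat
  assumes "m \<noteq> n"
  shows "disjnt {m * k..<Suc m * k} {n * k..<Suc n * k}"
proof -
  have "Suc m \<le> n \<or> Suc n \<le> m" using assms by linarith
  then have "Suc m * k \<le> n * k \<or> Suc n * k \<le> m * k" using mult_le_mono1 by blast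
  then show ?thesis unfolding disjnt_def by (elim disjE) (simp_all add: ivl_disj_int_two(3))
qed

lemma disjnt_inj_image:
  assumes "inj f" "disjnt X Y"
  shows "disjnt (f ` X) (f ` Y)"
  using assms by (simp add: disjnt_def image_Int [symmetric])

lemma infinite_pairwise_disjnt_range:
  fixes S :: "nat \<Rightarrow> 'a set"
  assumes "\<And>m n. m \<noteq> n \<Longrightarrow> disjnt (S m) (S n)" and "\<And>n. S n \<noteq> {}"
  shows "infinite (range S)" and "pairwise disjnt (range S)"
proof -
  have "inj S"
  proof (rule injI, rule ccontr)
    fix m n assume "S m = S n" "m \<noteq> n"
    then show False using assms by (metis disjnt_self_iff_empty)
  qed
  then show "infinite (range S)" by (rule range_inj_infinite)
  show "pairwise disjnt (range S)" using assms(1) by (rule pairwise_imageI)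
qed

lemma infinite_disjoint_family_of_degree:
  fixes w :: "nat \<Rightarrow> int" and a b :: int and \<alpha> \<beta> :: nat
  assumes "infinite {i. w i = a}" "infinite {i. w i = - b}" "a \<noteq> - b" "\<alpha> + \<beta> > 0"
  shows "\<exists>F. infinite F \<and> pairwise disjnt F \<and>
           (\<forall>S\<in>F. finite S \<and> card S = \<alpha> + \<beta> \<and> mono_deg w S = int \<alpha> * a - int \<beta> * b)"
proof -
  define f where "f = enumerate {i. w i = a}"
  define g where "g = enumerate {i. w i = - b}"
  define S where "S n = f ` {n * \<alpha>..<Suc n * \<alpha>} \<union> g ` {n * \<beta>..<Suc n * \<beta>}" for n
  have inj: "inj f" "inj g" using assms(1,2) by (simp_all add: f_def g_def inj_enumerate)
  have sub: "f ` I \<subseteq> {i. w i = a}" "g ` I \<subseteq> {i. w i = - b}" for I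
    using enumerate_in_set[OF assms(1)] enumerate_in_set[OF assms(2)] by (auto simp: f_def g_def)
  have fg: "disjnt (f ` I) (g ` J)" for I J
    using sub assms(3) by (fastforce simp: disjnt_def)
  have card: "card (f ` I) = card I" "card (g ` I) = card I" for I
    using inj by (simp_all add: card_image inj_on_subset)
  have card_S: "card (S n) = \<alpha> + \<beta>" for n
    using fg by (simp add: S_def card_Un_disjoint disjnt_def card)
  have deg_S: "mono_deg w (S n) = int \<alpha> * a - int \<beta> * b" for n
    using fg by (simp add: S_def mono_deg_Un mono_deg_fibre [OF _ sub(1)] mono_deg_fibre [OF _ sub(2)] card)
  have disjnt_S: "disjnt (S m) (S n)" if "m \<noteq> n" for m n
    using disjnt_inj_image [OF inj(1) disjnt_blocks [OF that]]
      disjnt_inj_image [OF inj(2) disjnt_blocks [OF that]] fg disjnt_sym [OF fg]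
    by (simp add: S_def)
  moreover have "S n \<noteq> {}" for n
    using card_S [of n] assms(4) by auto
  ultimately have "infinite (range S)" "pairwise disjnt (range S)"
    using infinite_pairwise_disjnt_range [of S] by blast+
  moreover have "finite (S n)" for n by (simp add: S_def)
  ultimately show ?thesis using card_S deg_S by (intro exI [of _ "range S"]) auto
qed

lemma is_grading_ecard_fibre:
  assumes "is_grading w rs vs" "j < length rs"
  shows "ecard {i. w i = rs ! j} = vs ! j"
  using assms by (simp add: is_grading_def)

lemma d_centralI:
  fixes w :: "nat \<Rightarrow> int" and a b c :: int
  assumes "a > 0" "b > 0" "c \<noteq> a" "c \<noteq> - b" "coprime (gcd a b) c"
    and "infinite {i. w i = a}" "infinite {i. w i = - b}"
    and "enat (nat (gcd a b - 1)) \<le> ecard {i. w i = c}"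
    and "odd (a div gcd a b + b div gcd a b)"
  shows "d_central w (gcd a b)"
  unfolding d_central_def
proof (intro conjI allI impI)
  fix r :: int
  obtain S where "finite S" "mono_deg w S = r"
    by (rule every_degree_attained [OF assms(1-8)])
  then show "\<exists>S. finite S \<and> mono_deg w S = r" by blast
next
  fix h :: int
  assume "gcd a b dvd h"
  then obtain \<alpha> \<beta> :: nat
    where "int \<alpha> * a - int \<beta> * b = h" "even (\<alpha> + \<beta>)" "\<alpha> + \<beta> > 0"
    by (rule even_nat_combination_exists [OF assms(1,2) _ assms(9)])
  moreover have "a \<noteq> - b" using assms(1,2) by simp
  ultimately obtain F where "infinite F" "pairwise disjnt F"
    and "\<forall>S\<in>F. finite S \<and> card S = \<alpha> + \<beta> \<and> mono_deg w S = h"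
    using infinite_disjoint_family_of_degree [OF assms(6,7), of \<alpha> \<beta>] by auto
  with \<open>even (\<alpha> + \<beta>)\<close> show "\<exists>F. infinite F \<and> pairwise disjnt F \<and>
      (\<forall>S\<in>F. finite S \<and> even (card S) \<and> mono_deg w S = h)"
    by auto
qed

theorem proposition4p9:
  fixes a b c :: int and k :: enat and w :: "nat \<Rightarrow> int"
  assumes "a > 0" and "b > 0" and "- b < c" and "c < a"
    and "gcd (gcd a b) c = 1"
    and "gcd a b \<noteq> 1" and "gcd a c \<noteq> 1" and "gcd b c \<noteq> 1"
    and "enat (nat (gcd a b - 1)) \<le> k"
    and "case_of a b \<in> {1, 2, 3}"
    and "is_grading w [- b, c, a] [\<infinity>, k, \<infinity>]"
  shows "d_central w (gcd a b)"
proof -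
  have ecard: "ecard {i. w i = - b} = \<infinity>" "ecard {i. w i = c} = k" "ecard {i. w i = a} = \<infinity>"
    using is_grading_ecard_fibre [OF assms(11), of 0] is_grading_ecard_fibre [OF assms(11), of 1]
      is_grading_ecard_fibre [OF assms(11), of 2]
    by simp_all
  show ?thesis
  proof (rule d_centralI [OF assms(1,2)])
    show "c \<noteq> a" "c \<noteq> - b" using assms(3,4) by auto
    show "coprime (gcd a b) c" using assms(5) by (simp add: coprime_iff_gcd_eq_1)
    show "infinite {i. w i = a}" "infinite {i. w i = - b}"
      using ecard by (simp_all flip: ecard_eq_infinity_iff)
    show "enat (nat (gcd a b - 1)) \<le> ecard {i. w i = c}" using assms(9) ecard by simp
    show "odd (a div gcd a b + b div gcd a b)"
      using odd_quotient_sum_if_not_case_4 assms(1,2,10) by auto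
  qed
qed

end
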